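(* Assume the standing setting of the context. Let $(x,y)\in\Lambda$ with $y>0$, and suppose $(x,y)$ is the winner at some point $(a,b)\in\Omega$. Then \[ \frac{x_0-1}{y_0}\le\frac{x-1}{y}<\frac{x_0-1}{y_0}+n\alpha, \] so the point $\big(\frac{x-1}{y},1\big)$ lies in $\Omega$, on its top edge. Moreover, $(x,y)$ is the winner at $\big(\frac{x-1}{y},1\big)$.
   Context: Setting. Let $(X,\omega)$ be a Veech translation surface and fix a cusp of its Veech group, normalized by a matrix $C\in\mathrm{SL}_2(\mathbb{R})$ as in Kumanduri–Sanchez–Wang. Let $\Lambda\subset\mathbb{R}^2$ be the set of holonomy vectors of saddle connections of the normalized surface $C\cdot(X,\omega)$; it is a discrete set. Distinguished vector. Let $(x_0,y_0)\in\Lambda$ be the vector such that $y_0>0$ is the smallest positive $y$-component of vectors of $\Lambda$, and $x_0>0$ is the smallest positive $x$-component among vectors of $\Lambda$ with $y$-component $y_0$. In particular, $y\ge y_0$ for every $(x,y)\in\Lambda$ with $y>0$. Cusp parameters. $\alpha>0$ is the cusp width parameter and $n\in\{1,2\}$; $n=2$ exactly when the parabolic generator of the cusp has eigenvalue $-1$. Transversal. \[ \Omega=\Big\{(a,b)\in\mathbb{R}^2: 0<b\le1,\ \tfrac{x_0}{y_0}b-\tfrac1{y_0}\le a<(\tfrac{x_0}{y_0}+n\alpha)b-\tfrac1{y_0}\Big\}. \] Its top edge is identified with the interval \[ A=\Big[\tfrac{x_0-1}{y_0},\tfrac{x_0-1}{y_0}+n\alpha\Big) \] via $a\mapsto(a,1)$.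 Winners. A vector $(x,y)\in\Lambda$ is a candidate winning vector at $(a,b)$ if $y>0$ and $0<bx-ay\le1$. For vectors with positive $y$-component, $(u,v)$ has slope at most that of $(x,y)$ iff $u/v\ge x/y$. The winner at $(a,b)\in\Omega$ is the candidate with the largest value of $x/y$ (least slope); if several share it, the winner is the shortest of them. *)

theory Defs
  imports "HOL-Analysis.Analysis"
begin

text \<open>Vectors of the plane are pairs (x, y) :: real \<times> real.
  Lam is the set of holonomy vectors of saddle connections of the normalized surface.\<close>

definition candidate :: "(real \<times> real) set \<Rightarrow> real \<Rightarrow> real \<Rightarrow> real \<times> real \<Rightarrow> bool" where
  "candidate Lam a b v \<longleftrightarrow> v \<in> Lam \<and> snd v > 0 \<and>
     0 < b * fst v - a * snd v \<and> b * fst v - a * snd v \<le> 1"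

definition winner :: "(real \<times> real) set \<Rightarrow> real \<Rightarrow> real \<Rightarrow> real \<times> real \<Rightarrow> bool" where
  "winner Lam a b v \<longleftrightarrow> candidate Lam a b v \<and>
     (\<forall>w. candidate Lam a b w \<longrightarrow> fst w / snd w \<le> fst v / snd v) \<and>
     (\<forall>w. candidate Lam a b w \<and> fst w / snd w = fst v / snd v \<longrightarrow> norm v \<le> norm w)"

definition Omega :: "real \<Rightarrow> real \<Rightarrow> real \<Rightarrow> nat \<Rightarrow> (real \<times> real) set" where
  "Omega x0 y0 \<alpha> n = {(a, b). 0 < b \<and> b \<le> 1 \<and>
     x0 / y0 * b - 1 / y0 \<le> a \<and> a < (x0 / y0 + real n * \<alpha>) * b - 1 / y0}"

end

theory Submission
  imports Defs
begin

text \<open>A winner (x, y) at (a, b) has 0 < b x - a y \<le> 1, so its slope is above a/b. Comparing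
  with (x0, y0), which is a candidate unless its slope is already at most a/b, gives
  x0/y0 \<le> x/y; together with y0 \<le> y this places (x - 1)/y on the top edge of \<Omega>. At the new
  point ((x - 1)/y, 1) the vector (x, y) is still a candidate, and every candidate there whose
  slope is at most that of (x, y) is also a candidate at (a, b), where (x, y) already beats it.\<close>

lemma candidate_top_edge:
  assumes "(x, y) \<in> Lam" and "y > 0"
  shows "candidate Lam ((x - 1) / y) 1 (x, y)"
  using assms by (simp add: candidate_def)

lemma slope_le_winner:
  assumes win: "winner Lam a b (x, y)" and b_pos: "b > 0"
    and w_in: "(u, v) \<in> Lam" and v_pos: "v > 0" and w_le: "b * u - a * v \<le> 1"
  shows "u / v \<le> x / y"
proof (cases "0 < b * u - a * v")
  case True
  then have "candidate Lam a b (u, v)"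
    using w_in v_pos w_le by (simp add: candidate_def)
  then show ?thesis
    using win by (fastforce simp: winner_def)
next
  case False
  have "0 < b * x - a * y" and "y > 0"
    using win by (auto simp: winner_def candidate_def)
  then have "a / b < x / y"
    using b_pos by (simp add: field_simps)
  moreover have "u / v \<le> a / b"
    using False b_pos v_pos by (simp add: field_simps)
  ultimately show ?thesis by linarith
qed

text \<open>A candidate (u, v) at the top-edge point of (x, y) with u/v \<ge> x/y is written as
  s (x, y) + (r, 0) with s = v/y > 0 and r \<ge> 0; evaluating the candidate condition at
  ((x - 1)/y, 1) gives s + r \<le> 1, and at (a, b) the value is s (b x - a y) + r b \<le> s + r.\<close>

lemma candidate_from_top_edge:
  assumes b_pos: "b > 0" and b_le: "b \<le> 1" and y_pos: "y > 0"
    and xy_pos: "0 < b * x - a * y" and xy_le: "b * x - a * y \<le> 1"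
    and cand: "candidate Lam ((x - 1) / y) 1 (u, v)" and slope: "x / y \<le> u / v"
  shows "candidate Lam a b (u, v)"
proof -
  have w_in: "(u, v) \<in> Lam" and v_pos: "v > 0" and top: "u - (x - 1) / y * v \<le> 1"
    using cand by (auto simp: candidate_def)
  define s where "s = v / y"
  define r where "r = u - s * x"
  have s_pos: "s > 0"
    using v_pos y_pos by (simp add: s_def)
  have r_nonneg: "r \<ge> 0"
    using slope v_pos y_pos by (simp add: r_def s_def field_simps)
  have v_eq: "v = s * y" and u_eq: "u = s * x + r"
    using y_pos by (simp_all add: s_def r_def)
  have "(s + r) * y \<le> 1 * y"
    using top y_pos by (simp add: u_eq v_eq field_simps)
  then have "s + r \<le> 1"
    using y_pos by (rule mult_right_le_imp_le)
  have "b * u - a * v = s * (b * x - a * y) + r * b"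
    by (simp add: u_eq v_eq algebra_simps)
  also have "\<dots> \<le> s * 1 + r * 1"
    using s_pos r_nonneg b_le xy_le
    by (intro add_mono mult_left_mono) auto
  finally have le: "b * u - a * v \<le> 1"
    using \<open>s + r \<le> 1\<close> by linarith
  have "a / b < x / y"
    using xy_pos b_pos y_pos by (simp add: field_simps)
  with slope have "a / b < u / v"
    by linarith
  then have "0 < b * u - a * v"
    using slope b_pos v_pos by (simp add: field_simps)
  with le w_in v_pos show ?thesis
    by (simp add: candidate_def)
qed

lemma winner_if_candidates_transfer:
  assumes win: "winner Lam a b v" and cand: "candidate Lam a' b' v"
    and transfer: "\<And>w. candidate Lam a' b' w \<Longrightarrow> fst v / snd v \<le> fst w / snd w
                       \<Longrightarrow> candidate Lam a b w"
  shows "winner Lam a' b' v"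
  unfolding winner_def
proof (intro conjI allI impI)
  fix w
  assume cw: "candidate Lam a' b' w"
  show "fst w / snd w \<le> fst v / snd v"
  proof (rule ccontr)
    assume "\<not> fst w / snd w \<le> fst v / snd v"
    moreover from this have "candidate Lam a b w"
      using transfer cw by simp
    ultimately show False
      using win by (auto simp: winner_def)
  qed
next
  fix w
  assume tie: "candidate Lam a' b' w \<and> fst w / snd w = fst v / snd v"
  then have "candidate Lam a b w"
    using transfer by simp
  with tie win show "norm v \<le> norm w"
    unfolding winner_def by blast
qed (fact cand)

lemma top_edge_lower_bound:
  fixes x y x0 y0 :: real
  assumes "0 < y0" "y0 \<le> y" "x0 / y0 \<le> x / y"
  shows "(x0 - 1) / y0 \<le> (x - 1) / y"
proof -
  have "1 / y \<le> 1 / y0"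
    using assms by (simp add: frac_le)
  then show ?thesis
    using assms by (simp add: diff_divide_distrib)
qed

lemma top_edge_upper_bound:
  fixes x y x0 y0 a b c :: real
  assumes y0_pos: "0 < y0" and y_ge: "y0 \<le> y" and b_pos: "0 < b" and b_le: "b \<le> 1"
    and xy_le: "b * x - a * y \<le> 1" and a_lt: "a < (x0 / y0 + c) * b - 1 / y0"
  shows "(x - 1) / y < (x0 - 1) / y0 + c"
proof -
  have y_pos: "y > 0"
    using y0_pos y_ge by linarith
  have "(1 / y) * (1 / b - 1) \<le> (1 / y0) * (1 / b - 1)"
    using y0_pos y_ge b_pos b_le by (intro mult_right_mono) (auto simp: frac_le field_simps)
  moreover have "x / y \<le> a / b + 1 / (b * y)"
    using xy_le b_pos y_pos by (simp add: field_simps)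
  moreover have "a / b < x0 / y0 + c - 1 / (y0 * b)"
    using a_lt b_pos y0_pos by (simp add: field_simps)
  moreover have "(x - 1) / y = x / y - 1 / (b * y) + (1 / y) * (1 / b - 1)"
    and "(x0 - 1) / y0 + c = x0 / y0 + c - 1 / (y0 * b) + (1 / y0) * (1 / b - 1)"
    using b_pos y_pos y0_pos by (simp_all add: field_simps)
  ultimately show ?thesis by linarith
qed

theorem lemma3p1:
  fixes Lam :: "(real \<times> real) set" and x0 y0 \<alpha> x y a b :: real and n :: nat
  assumes discrete: "\<And>r. finite {v \<in> Lam. norm v \<le> r}"
    and x0y0_in: "(x0, y0) \<in> Lam"
    and y0_pos: "y0 > 0"
    and y0_min: "\<And>u v. (u, v) \<in> Lam \<Longrightarrow> v > 0 \<Longrightarrow> y0 \<le> v"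
    and x0_pos: "x0 > 0"
    and x0_min: "\<And>u. (u, y0) \<in> Lam \<Longrightarrow> u > 0 \<Longrightarrow> x0 \<le> u"
    and alpha_pos: "\<alpha> > 0"
    and n_cases: "n \<in> {1, 2}"
    and xy_in: "(x, y) \<in> Lam"
    and y_pos: "y > 0"
    and ab_in: "(a, b) \<in> Omega x0 y0 \<alpha> n"
    and win: "winner Lam a b (x, y)"
  shows "(x0 - 1) / y0 \<le> (x - 1) / y \<and> (x - 1) / y < (x0 - 1) / y0 + real n * \<alpha>
         \<and> ((x - 1) / y, 1) \<in> Omega x0 y0 \<alpha> n
         \<and> winner Lam ((x - 1) / y) 1 (x, y)"
proof -
  have b_pos: "0 < b" and b_le: "b \<le> 1" and a_ge: "x0 / y0 * b - 1 / y0 \<le> a"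
    and a_lt: "a < (x0 / y0 + real n * \<alpha>) * b - 1 / y0"
    using ab_in by (auto simp: Omega_def)
  have xy_pos: "0 < b * x - a * y" and xy_le: "b * x - a * y \<le> 1"
    using win by (auto simp: winner_def candidate_def)
  have y_ge: "y0 \<le> y"
    using y0_min xy_in y_pos by blast
  have "b * x0 - a * y0 \<le> 1"
    using a_ge y0_pos by (simp add: field_simps)
  then have "x0 / y0 \<le> x / y"
    using slope_le_winner win b_pos x0y0_in y0_pos by blast
  then have lower: "(x0 - 1) / y0 \<le> (x - 1) / y"
    using top_edge_lower_bound y0_pos y_ge by blast
  have upper: "(x - 1) / y < (x0 - 1) / y0 + real n * \<alpha>"
    using top_edge_upper_bound y0_pos y_ge b_pos b_le xy_le a_lt by blast
  have "((x - 1) / y, 1) \<in> Omega x0 y0 \<alpha> n"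
    using lower upper by (simp add: Omega_def diff_divide_distrib)
  moreover have "winner Lam ((x - 1) / y) 1 (x, y)"
    using win candidate_top_edge[OF xy_in y_pos]
  proof (rule winner_if_candidates_transfer)
    fix w
    assume "candidate Lam ((x - 1) / y) 1 w" and "fst (x, y) / snd (x, y) \<le> fst w / snd w"
    then show "candidate Lam a b w"
      using candidate_from_top_edge[OF b_pos b_le y_pos xy_pos xy_le, of Lam "fst w" "snd w"]
      by simp
  qed
  ultimately show ?thesis
    using lower upper by blast
qed

end
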